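(* In the extended twisted super Yangian $\widetilde{\mathscr B}_{\mathbf s,\boldsymbol\varepsilon}$ the product $B(u)B(-u)$ is a scalar matrix: $B(u)B(-u)=f(u)\cdot 1$, where $f(u)$ is a power series in $u^{-2}$ whose coefficients are central in $\widetilde{\mathscr B}_{\mathbf s,\boldsymbol\varepsilon}$.
   Context: Fix integers $m,n\ge 0$, $\kappa=m+n$, a parity sequence $\mathbf s=(s_1,\dots,s_\kappa)\in\{\pm1\}^\kappa$ with exactly $m$ entries equal to $1$, and write $|i|\in\mathbb Z_2$ with $s_i=(-1)^{|i|}$. Let $V=\mathbb C^{m|n}$ have basis $v_i$ of parity $|i|$ and matrix units $E_{ij}$. Fix $\boldsymbol\varepsilon=(\varepsilon_1,\dots,\varepsilon_\kappa)\in\{\pm1\}^\kappa$. Let $\mathcal P=\sum_{i,j}s_jE_{ij}\otimes E_{ji}\in\mathrm{End}(V\otimes V)$ and $R(u)=1-\mathcal P/u$. The extended twisted super Yangian $\widetilde{\mathscr B}_{\mathbf s,\boldsymbol\varepsilon}$ is the unital associative superalgebra generated by $b_{ij}^{(r)}$ ($1\le i,j\le\kappa$, $r\ge1$) of parity $|i|+|j|$, with $b_{ij}(u)=\delta_{ij}\varepsilon_i+\sum_{r\ge1}b_{ij}^{(r)}u^{-r}$, $B(u)=\sum_{i,j}(-1)^{|i||j|+|j|}b_{ij}(u)\otimes E_{ij}$, subject only to the reflection equation $R(u-v)B_1(u)R(u+v)B_2(v)=B_2(v)R(u+v)B_1(u)R(u-v)$ (with $B_1,B_2$ acting in the first, resp.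 second, tensor factor of $\mathrm{End}(V)^{\otimes 2}$, usual super sign conventions). (The twisted super Yangian $\mathscr B_{\mathbf s,\boldsymbol\varepsilon}$ is its quotient by the unitary condition $B(u)B(-u)=1$.) *)

theory Defs
  imports Complex_Main
begin

(* Parity |i| of index i, from the parity sequence s: s i = (-1)^|i| *)
definition par :: "(nat \<Rightarrow> int) \<Rightarrow> nat \<Rightarrow> nat" where
  "par s i = (if s i = 1 then 0 else 1)"

definition msign :: "nat \<Rightarrow> 'a::ring_1" where
  "msign k = (-1) ^ k"

definition is_C_algebra :: "(complex \<Rightarrow> 'a::ring_1) \<Rightarrow> bool" where
  "is_C_algebra phi \<longleftrightarrow>
     phi 1 = 1 \<and> (\<forall>x y. phi (x + y) = phi x + phi y) \<and> (\<forall>x y. phi (x * y) = phi x * phi y)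
     \<and> (\<forall>c a. phi c * a = a * phi c)"

(* coefficient of u^{-r} in b_ij(u) = delta_ij eps_i + sum_{r>=1} b_ij^(r) u^{-r} *)
definition bser :: "(nat \<Rightarrow> nat \<Rightarrow> nat \<Rightarrow> 'a::ring_1) \<Rightarrow> (nat \<Rightarrow> int) \<Rightarrow> nat \<Rightarrow> nat \<Rightarrow> nat \<Rightarrow> 'a" where
  "bser b eps i j r = (if r = 0 then (if i = j then of_int (eps i) else 0) else b i j r)"

(* Even elements of A[[x,y]] (x) End(V) (x) End(V), x = u^{-1}, y = v^{-1}:
   X n m a b c d is the coefficient of  x^n y^m (x) E_ab (x) E_cd.
   For an even element this coefficient has parity |a|+|b|+|c|+|d|. *)
type_synonym 'a tser = "nat \<Rightarrow> nat \<Rightarrow> nat \<Rightarrow> nat \<Rightarrow> nat \<Rightarrow> nat \<Rightarrow> 'a"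

(* product of even elements with the super sign rules
   (x(x)M)(y(x)N) = (-1)^{|M||y|} xy (x) MN  and
   (E_ab(x)E_cd)(E_bf(x)E_dh) = (-1)^{|E_cd||E_bf|} E_af (x) E_ch *)
definition tmul :: "(nat \<Rightarrow> int) \<Rightarrow> nat \<Rightarrow> 'a::ring_1 tser \<Rightarrow> 'a tser \<Rightarrow> 'a tser" where
  "tmul s \<kappa> X Y n m a f c h =
     (\<Sum>p\<le>n. \<Sum>q\<le>m. \<Sum>b\<in>{1..\<kappa>}. \<Sum>d\<in>{1..\<kappa>}.
        msign ((par s a + par s b + par s c + par s d) * (par s b + par s f + par s d + par s h)
               + (par s c + par s d) * (par s b + par s f))
        * X p q a b c d * Y (n - p) (m - q) b f d h)"

definition tadd :: "'a::ring_1 tser \<Rightarrow> 'a tser \<Rightarrow> 'a tser" where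
  "tadd X Y n m a b c d = X n m a b c d + Y n m a b c d"

definition tsub :: "'a::ring_1 tser \<Rightarrow> 'a tser \<Rightarrow> 'a tser" where
  "tsub X Y n m a b c d = X n m a b c d - Y n m a b c d"

definition tconst :: "nat \<Rightarrow> nat \<Rightarrow> (nat \<Rightarrow> nat \<Rightarrow> nat \<Rightarrow> nat \<Rightarrow> 'a::ring_1) \<Rightarrow> 'a tser" where
  "tconst n0 m0 M n m a b c d = (if n = n0 \<and> m = m0 then M a b c d else 0)"

definition Id2 :: "nat \<Rightarrow> nat \<Rightarrow> nat \<Rightarrow> nat \<Rightarrow> 'a::ring_1" where
  "Id2 a b c d = (if a = b \<and> c = d then 1 else 0)"

(* P = sum_{i,j} s_j E_ij (x) E_ji *)
definition Pmat :: "(nat \<Rightarrow> int) \<Rightarrow> nat \<Rightarrow> nat \<Rightarrow> nat \<Rightarrow> nat \<Rightarrow> 'a::ring_1" where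
  "Pmat s a b c d = (if b = c \<and> a = d then of_int (s b) else 0)"

(* B_1(u) = sum (-1)^{|i||j|+|j|} b_ij(u) (x) E_ij (x) 1, as series in x = u^{-1} *)
definition B1 :: "(nat \<Rightarrow> int) \<Rightarrow> (nat \<Rightarrow> int) \<Rightarrow> (nat \<Rightarrow> nat \<Rightarrow> nat \<Rightarrow> 'a::ring_1) \<Rightarrow> 'a tser" where
  "B1 s eps b n m i j c d =
     (if m = 0 \<and> c = d then msign (par s i * par s j + par s j) * bser b eps i j n else 0)"

(* B_2(v) = sum (-1)^{|k||l|+|l|} b_kl(v) (x) 1 (x) E_kl, as series in y = v^{-1} *)
definition B2 :: "(nat \<Rightarrow> int) \<Rightarrow> (nat \<Rightarrow> int) \<Rightarrow> (nat \<Rightarrow> nat \<Rightarrow> nat \<Rightarrow> 'a::ring_1) \<Rightarrow> 'a tser" where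
  "B2 s eps b n m a a' k l =
     (if n = 0 \<and> a = a' then msign (par s k * par s l + par s l) * bser b eps k l m else 0)"

(* (u-v) u^{-1} v^{-1} R(u-v) = (y - x) - x y P   and
   (u+v) u^{-1} v^{-1} R(u+v) = (y + x) - x y P *)
definition Rminus :: "(nat \<Rightarrow> int) \<Rightarrow> 'a::ring_1 tser" where
  "Rminus s = tsub (tsub (tconst 0 1 Id2) (tconst 1 0 Id2)) (tconst 1 1 (Pmat s))"

definition Rplus :: "(nat \<Rightarrow> int) \<Rightarrow> 'a::ring_1 tser" where
  "Rplus s = tsub (tadd (tconst 0 1 Id2) (tconst 1 0 Id2)) (tconst 1 1 (Pmat s))"

(* Reflection equation R(u-v)B_1(u)R(u+v)B_2(v) = B_2(v)R(u+v)B_1(u)R(u-v),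
   after multiplying both sides by the central scalar (u-v)(u+v)u^{-2}v^{-2},
   imposed coefficientwise for all indices in {1..kappa}. *)
definition reflection_eq ::
  "nat \<Rightarrow> (nat \<Rightarrow> int) \<Rightarrow> (nat \<Rightarrow> int) \<Rightarrow> (nat \<Rightarrow> nat \<Rightarrow> nat \<Rightarrow> 'a::ring_1) \<Rightarrow> bool" where
  "reflection_eq \<kappa> s eps b \<longleftrightarrow>
     (\<forall>n m a f c h. a \<in> {1..\<kappa>} \<longrightarrow> f \<in> {1..\<kappa>} \<longrightarrow> c \<in> {1..\<kappa>} \<longrightarrow> h \<in> {1..\<kappa>} \<longrightarrow>
        tmul s \<kappa> (tmul s \<kappa> (tmul s \<kappa> (Rminus s) (B1 s eps b)) (Rplus s)) (B2 s eps b) n m a f c h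
      = tmul s \<kappa> (tmul s \<kappa> (tmul s \<kappa> (B2 s eps b) (Rplus s)) (B1 s eps b)) (Rminus s) n m a f c h)"

(* coefficient of u^{-n} (x) E_il in B(u)B(-u) in A[[u^{-1}]] (x) End(V) *)
definition BBminus :: "nat \<Rightarrow> (nat \<Rightarrow> int) \<Rightarrow> (nat \<Rightarrow> int) \<Rightarrow> (nat \<Rightarrow> nat \<Rightarrow> nat \<Rightarrow> 'a::ring_1)
    \<Rightarrow> nat \<Rightarrow> nat \<Rightarrow> nat \<Rightarrow> 'a" where
  "BBminus \<kappa> s eps b n i l =
     (\<Sum>p\<le>n. \<Sum>j\<in>{1..\<kappa>}.
        msign ((par s i + par s j) * (par s j + par s l))
        * (msign (par s i * par s j + par s j) * bser b eps i j p)
        * (msign (par s j * par s l + par s l) * msign (n - p) * bser b eps j l (n - p)))"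

end

theory Submission
  imports Defs
begin

text \<open>
  Put \<open>C(u) = B(u) B(-u)\<close>. At \<open>v = -u\<close> the rescaled \<open>R(u + v)\<close> degenerates to a multiple of \<open>P\<close>,
  and \<open>P B\<^sub>2(-u) P = B\<^sub>1(-u)\<close>, so the reflection equation becomes
  \<open>(u\<^sup>-\<^sup>2 P - 2 u\<^sup>-\<^sup>1) C\<^sub>1(u) P = P C\<^sub>1(-u) (u\<^sup>-\<^sup>2 P - 2 u\<^sup>-\<^sup>1)\<close>. Comparing coefficients, and
  dividing by 2 (possible in a \<open>\<complex>\<close>-algebra), shows that \<open>C(u)\<close> is a scalar series \<open>f(u)\<close> with
  \<open>f(-u) = f(u)\<close>. Being scalar, \<open>C\<^sub>1(u)\<close> commutes with \<open>P\<close> and hence with \<open>R(u \<plusminus> v)\<close>.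
  Evaluating \<open>R(u - v) B\<^sub>1(u) R(u + v) B\<^sub>2(v) R(-u - v) B\<^sub>1(-u) R(v - u)\<close> once by the reflection
  equation and once by its image under \<open>u \<mapsto> -u\<close>, the unitarity \<open>R(w) R(-w) = 1 - w\<^sup>-\<^sup>2\<close> turns it into
  \<open>g \<cdot> B\<^sub>2(v) C\<^sub>1(u) = g \<cdot> C\<^sub>1(u) B\<^sub>2(v)\<close> for a scalar series \<open>g\<close> that is not a zero divisor;
  so the coefficients of \<open>f\<close> commute with all \<open>b\<^sub>i\<^sub>j\<^sup>(\<^sup>r\<^sup>)\<close>.
\<close>

lemma sum_convolution3_reindex:
  fixes F :: "nat \<Rightarrow> nat \<Rightarrow> nat \<Rightarrow> 'b::comm_monoid_add"
  shows "(\<Sum>p\<le>n. \<Sum>i\<le>p. F i (p - i) (n - p)) = (\<Sum>i\<le>n. \<Sum>j\<le>n - i. F i j (n - i - j))"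
proof -
  have "(\<Sum>p\<le>n. \<Sum>i\<le>p. F i (p - i) (n - p)) = (\<Sum>(p,i)\<in>Sigma {..n} (\<lambda>p. {..p}). F i (p - i) (n - p))"
    by (rule sum.Sigma) auto
  also have "\<dots> = (\<Sum>(i,j)\<in>Sigma {..n} (\<lambda>i. {..n-i}). F i j (n - i - j))"
    by (rule sum.reindex_bij_witness[where i="\<lambda>(i,j). (i+j, i)" and j="\<lambda>(p,i). (i, p - i)"]) auto
  also have "\<dots> = (\<Sum>i\<le>n. \<Sum>j\<le>n - i. F i j (n - i - j))"
    by (rule sum.Sigma[symmetric]) auto
  finally show ?thesis .
qed

lemma sum_triangle_swap:
  fixes F :: "nat \<Rightarrow> nat \<Rightarrow> 'b::comm_monoid_add"
  shows "(\<Sum>i\<le>n. \<Sum>j\<le>n - i. F i j) = (\<Sum>j\<le>n. \<Sum>i\<le>n - j. F i j)"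
proof -
  have "(\<Sum>i\<le>n. \<Sum>j\<le>n - i. F i j) = (\<Sum>(i,j)\<in>Sigma {..n} (\<lambda>i. {..n-i}). F i j)"
    by (rule sum.Sigma) auto
  also have "\<dots> = (\<Sum>(j,i)\<in>Sigma {..n} (\<lambda>j. {..n-j}). F i j)"
    by (rule sum.reindex_bij_witness[where j="\<lambda>(i,j). (j,i)" and i="\<lambda>(i,j). (j,i)"]) auto
  also have "\<dots> = (\<Sum>j\<le>n. \<Sum>i\<le>n - j. F i j)"
    by (rule sum.Sigma[symmetric]) auto
  finally show ?thesis .
qed

lemma sum_swap_outer_pair:
  "(\<Sum>x\<in>A. \<Sum>y\<in>B. \<Sum>z\<in>C. \<Sum>w\<in>D. V x y z w) = (\<Sum>z\<in>C. \<Sum>w\<in>D. \<Sum>x\<in>A. \<Sum>y\<in>B. V x y z w)"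
proof -
  have "(\<Sum>x\<in>A. \<Sum>y\<in>B. \<Sum>z\<in>C. \<Sum>w\<in>D. V x y z w) = (\<Sum>x\<in>A. \<Sum>z\<in>C. \<Sum>y\<in>B. \<Sum>w\<in>D. V x y z w)"
    by (rule sum.cong[OF refl], rule sum.swap)
  also have "\<dots> = (\<Sum>z\<in>C. \<Sum>x\<in>A. \<Sum>w\<in>D. \<Sum>y\<in>B. V x y z w)"
    by (subst sum.swap) (rule sum.cong[OF refl], rule sum.cong[OF refl], rule sum.swap)
  also have "\<dots> = (\<Sum>z\<in>C. \<Sum>w\<in>D. \<Sum>x\<in>A. \<Sum>y\<in>B. V x y z w)"
    by (rule sum.cong[OF refl], rule sum.swap)
  finally show ?thesis .
qed

lemma sum_mult_sum_reorder:
  "(\<Sum>b\<in>B. \<Sum>d\<in>D. w b d * (\<Sum>i\<in>I. A i b d) * (\<Sum>k\<in>K. C k b d))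
   = (\<Sum>i\<in>I. \<Sum>k\<in>K. \<Sum>b\<in>B. \<Sum>d\<in>D. w b d * A i b d * (C k b d :: 'a::ring_1))"
  by (simp only: sum_distrib_left sum_distrib_right) (subst sum_swap_outer_pair, rule sum.swap)

lemma sum4_collapse:
  assumes "\<And>p q b d. p \<le> n \<Longrightarrow> q \<le> m \<Longrightarrow> b \<in> R \<Longrightarrow> d \<in> R \<Longrightarrow>
      G p q b d = (if p = p' \<and> q = q' \<and> b = b' \<and> d = d' then T else 0)"
    and "finite R"
  shows "(\<Sum>p\<le>(n::nat). \<Sum>q\<le>(m::nat). \<Sum>b\<in>R. \<Sum>d\<in>R. G p q b d)
       = (if p' \<le> n \<and> q' \<le> m \<and> b' \<in> R \<and> d' \<in> R then T else (0::'b::comm_monoid_add))"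
proof -
  have "(\<Sum>p\<le>n. \<Sum>q\<le>m. \<Sum>b\<in>R. \<Sum>d\<in>R. G p q b d) =
     (\<Sum>p\<le>n. \<Sum>q\<le>m. \<Sum>b\<in>R. \<Sum>d\<in>R. if p = p' \<and> q = q' \<and> b = b' \<and> d = d' then T else 0)"
    by (intro sum.cong refl) (simp add: assms(1))
  also have "\<dots> = (if p' \<le> n \<and> q' \<le> m \<and> b' \<in> R \<and> d' \<in> R then T else 0)"
  proof -
    have pull: "(\<Sum>x\<in>A. if P then f x else 0) = (if P then sum f A else 0)" for P A and f :: "_ \<Rightarrow> 'b"
      by simp
    show ?thesis
      using assms(2) by (simp only: if_if_eq_conj[symmetric] pull) (simp add: sum.delta sum.delta' cong: if_cong)
  qed
  finally show ?thesis .
qed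

lemma sum4_collapse_partial:
  assumes "\<And>p q b d. p \<le> n \<Longrightarrow> q \<le> m \<Longrightarrow> b \<in> R \<Longrightarrow> d \<in> R \<Longrightarrow>
      G p q b d = (if q = q' \<and> d = d' then T p b else 0)"
    and "finite R"
  shows "(\<Sum>p\<le>(n::nat). \<Sum>q\<le>(m::nat). \<Sum>b\<in>R. \<Sum>d\<in>R. G p q b d)
       = (if q' \<le> m \<and> d' \<in> R then (\<Sum>p\<le>n. \<Sum>b\<in>R. T p b) else (0::'b::comm_monoid_add))"
proof -
  have "(\<Sum>p\<le>n. \<Sum>q\<le>m. \<Sum>b\<in>R. \<Sum>d\<in>R. G p q b d) =
     (\<Sum>p\<le>n. \<Sum>q\<le>m. if q = q' then (\<Sum>b\<in>R. \<Sum>d\<in>R. if d = d' then T p b else 0) else 0)"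
    by (intro sum.cong refl) (simp add: assms(1))
  also have "\<dots> = (if q' \<le> m \<and> d' \<in> R then (\<Sum>p\<le>n. \<Sum>b\<in>R. T p b) else 0)"
    using assms(2) by (simp add: sum.delta sum.delta' cong: if_cong)
  finally show ?thesis .
qed

lemma msign_add: "msign (a + b) = (msign a * msign b :: 'a::ring_1)"
  by (simp add: msign_def power_add)

lemma msign_even: "even k \<Longrightarrow> msign k = (1::'a::ring_1)"
  by (simp add: msign_def)

lemma msign_odd: "odd k \<Longrightarrow> msign k = (-1::'a::ring_1)"
  by (simp add: msign_def)

lemma msign_commute: "msign k * x = x * (msign k :: 'a::ring_1)"
  by (cases "even k") (simp_all add: msign_even msign_odd)

lemma msign_cong: "even a = even b \<Longrightarrow> msign a = (msign b :: 'a::ring_1)"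
  by (cases "even a") (simp_all add: msign_even msign_odd)

lemma msign_mult_self: "msign k * msign k = (1 :: 'a::ring_1)"
  by (cases "even k") (simp_all add: msign_even msign_odd)

lemma of_int_sign_eq_msign_par:
  "s i = 1 \<or> s i = -1 \<Longrightarrow> (of_int (s i) :: 'a::ring_1) = msign (par s i)"
  by (auto simp: par_def msign_def)

lemma mult_central_factors:
  fixes u v w :: "'a::ring_1"
  assumes "\<And>x. u * x = x * u" and "\<And>x. v * x = x * v"
  shows "w * (u * X) * (v * Y) = (u * v) * (w * X * Y)"
  by (metis assms mult.assoc)

section \<open>The graded product of series\<close>

definition tsign :: "(nat \<Rightarrow> int) \<Rightarrow> nat \<Rightarrow> nat \<Rightarrow> nat \<Rightarrow> nat \<Rightarrow> nat \<Rightarrow> nat \<Rightarrow> 'a::ring_1" where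
  "tsign s a b c d f h = msign ((par s a + par s b + par s c + par s d) * (par s b + par s f + par s d + par s h)
     + (par s c + par s d) * (par s b + par s f))"

lemma tmul_tsign: "tmul s \<kappa> X Y n m a f c h =
   (\<Sum>p\<le>n. \<Sum>q\<le>m. \<Sum>b\<in>{1..\<kappa>}. \<Sum>d\<in>{1..\<kappa>}. tsign s a b c d f h * X p q a b c d * Y (n - p) (m - q) b f d h)"
  by (simp add: tmul_def tsign_def)

lemma tsign_commute: "tsign s a b c d f h * x = x * (tsign s a b c d f h :: 'a::ring_1)"
  by (simp add: tsign_def msign_commute)

lemma tsign_mult_self: "tsign s a b c d f h * tsign s a b c d f h = (1::'a::ring_1)"
  by (simp add: tsign_def msign_mult_self)

lemma tsign_left_commute: "x * (tsign s a b c d f h * y) = tsign s a b c d f h * (x * y :: 'a::ring_1)"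
  by (metis mult.assoc tsign_commute)

lemma tsign_cocycle:
  "(tsign s a f c h g k * tsign s a b c d f h :: 'a::ring_1) = tsign s a b c d g k * tsign s b f d h g k"
  unfolding tsign_def msign_add[symmetric]
  by (rule msign_cong) (simp add: even_add even_mult_iff, blast)

lemma tmul_tmul_left_expand:
  "tmul s \<kappa> (tmul s \<kappa> X Y) Z n m a g c k =
   (\<Sum>p\<le>n. \<Sum>i\<le>p. \<Sum>q\<le>m. \<Sum>j\<le>q. \<Sum>b\<in>{1..\<kappa>}. \<Sum>d\<in>{1..\<kappa>}. \<Sum>f\<in>{1..\<kappa>}. \<Sum>h\<in>{1..\<kappa>}.
      tsign s a f c h g k * tsign s a b c d f h * (X i j a b c d * Y (p - i) (q - j) b f d h * Z (n - p) (m - q) f g h k))"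
  (is "_ = ?rhs")
proof -
  let ?R = "{1..\<kappa>}"
  have "tmul s \<kappa> (tmul s \<kappa> X Y) Z n m a g c k =
     (\<Sum>p\<le>n. \<Sum>q\<le>m. \<Sum>f\<in>?R. \<Sum>h\<in>?R. \<Sum>i\<le>p. \<Sum>j\<le>q. \<Sum>b\<in>?R. \<Sum>d\<in>?R.
        tsign s a f c h g k * tsign s a b c d f h * (X i j a b c d * Y (p - i) (q - j) b f d h * Z (n - p) (m - q) f g h k))"
    unfolding tmul_tsign by (simp only: sum_distrib_left sum_distrib_right mult.assoc)
  also have "\<dots> = (\<Sum>p\<le>n. \<Sum>q\<le>m. \<Sum>i\<le>p. \<Sum>j\<le>q. \<Sum>b\<in>?R. \<Sum>d\<in>?R. \<Sum>f\<in>?R. \<Sum>h\<in>?R.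
        tsign s a f c h g k * tsign s a b c d f h * (X i j a b c d * Y (p - i) (q - j) b f d h * Z (n - p) (m - q) f g h k))"
    by (rule sum.cong[OF refl], rule sum.cong[OF refl], subst sum_swap_outer_pair,
        rule sum.cong[OF refl], rule sum.cong[OF refl], rule sum_swap_outer_pair)
  also have "\<dots> = ?rhs"
    by (rule sum.cong[OF refl], rule sum.swap)
  finally show ?thesis .
qed

lemma tmul_tmul_right_expand:
  "tmul s \<kappa> X (tmul s \<kappa> Y Z) n m a g c k =
   (\<Sum>i\<le>n. \<Sum>i'\<le>n - i. \<Sum>j\<le>m. \<Sum>j'\<le>m - j. \<Sum>b\<in>{1..\<kappa>}. \<Sum>d\<in>{1..\<kappa>}. \<Sum>f\<in>{1..\<kappa>}. \<Sum>h\<in>{1..\<kappa>}.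
      tsign s a b c d g k * tsign s b f d h g k * (X i j a b c d * Y i' j' b f d h * Z (n - i - i') (m - j - j') f g h k))"
  (is "_ = ?rhs")
proof -
  let ?R = "{1..\<kappa>}"
  have "tmul s \<kappa> X (tmul s \<kappa> Y Z) n m a g c k =
     (\<Sum>i\<le>n. \<Sum>j\<le>m. \<Sum>b\<in>?R. \<Sum>d\<in>?R. \<Sum>i'\<le>n - i. \<Sum>j'\<le>m - j. \<Sum>f\<in>?R. \<Sum>h\<in>?R.
        tsign s a b c d g k * X i j a b c d * (tsign s b f d h g k * Y i' j' b f d h * Z (n - i - i') (m - j - j') f g h k))"
    unfolding tmul_tsign by (simp only: sum_distrib_left sum_distrib_right diff_diff_left)
  also have "\<dots> = (\<Sum>i\<le>n. \<Sum>j\<le>m. \<Sum>b\<in>?R. \<Sum>d\<in>?R. \<Sum>i'\<le>n - i. \<Sum>j'\<le>m - j. \<Sum>f\<in>?R. \<Sum>h\<in>?R.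
        tsign s a b c d g k * tsign s b f d h g k * (X i j a b c d * Y i' j' b f d h * Z (n - i - i') (m - j - j') f g h k))"
    by (intro sum.cong refl) (simp only: mult.assoc, subst tsign_left_commute, rule refl)
  also have "\<dots> = (\<Sum>i\<le>n. \<Sum>j\<le>m. \<Sum>i'\<le>n - i. \<Sum>j'\<le>m - j. \<Sum>b\<in>?R. \<Sum>d\<in>?R. \<Sum>f\<in>?R. \<Sum>h\<in>?R.
        tsign s a b c d g k * tsign s b f d h g k * (X i j a b c d * Y i' j' b f d h * Z (n - i - i') (m - j - j') f g h k))"
    by (rule sum.cong[OF refl], rule sum.cong[OF refl], rule sum_swap_outer_pair)
  also have "\<dots> = ?rhs"
    by (rule sum.cong[OF refl], rule sum.swap)
  finally show ?thesis .
qed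

lemma tmul_assoc: "tmul s \<kappa> (tmul s \<kappa> X Y) Z = tmul s \<kappa> X (tmul s \<kappa> Y Z)"
proof (intro ext)
  fix n m a g c k
  show "tmul s \<kappa> (tmul s \<kappa> X Y) Z n m a g c k = tmul s \<kappa> X (tmul s \<kappa> Y Z) n m a g c k"
    unfolding tmul_tmul_left_expand tmul_tmul_right_expand tsign_cocycle
    by (subst sum_convolution3_reindex[where F="\<lambda>i i' i''. \<Sum>q\<le>m. \<Sum>j\<le>q. \<Sum>b\<in>{1..\<kappa>}. \<Sum>d\<in>{1..\<kappa>}.
          \<Sum>f\<in>{1..\<kappa>}. \<Sum>h\<in>{1..\<kappa>}. tsign s a b c d g k * tsign s b f d h g k
          * (X i j a b c d * Y i' (q - j) b f d h * Z i'' (m - q) f g h k)"])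
       (rule sum.cong[OF refl], rule sum.cong[OF refl], rule sum_convolution3_reindex)
qed

definition tres :: "nat \<Rightarrow> 'a::ring_1 tser \<Rightarrow> 'a tser" where
  "tres \<kappa> X n m a b c d =
     (if a \<in> {1..\<kappa>} \<and> b \<in> {1..\<kappa>} \<and> c \<in> {1..\<kappa>} \<and> d \<in> {1..\<kappa>} then X n m a b c d else 0)"

definition tprod :: "(nat \<Rightarrow> int) \<Rightarrow> nat \<Rightarrow> 'a::ring_1 tser \<Rightarrow> 'a tser \<Rightarrow> 'a tser" where
  "tprod s \<kappa> X Y = tmul s \<kappa> (tres \<kappa> X) (tres \<kappa> Y)"

lemma tres_tres [simp]: "tres \<kappa> (tres \<kappa> X) = tres \<kappa> X"
  by (simp add: tres_def fun_eq_iff)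

lemma tres_tmul: "tres \<kappa> (tmul s \<kappa> X Y) = tprod s \<kappa> X Y"
proof (intro ext)
  fix n m a f c h
  show "tres \<kappa> (tmul s \<kappa> X Y) n m a f c h = tprod s \<kappa> X Y n m a f c h"
    unfolding tprod_def tmul_tsign tres_def
    by (cases "a \<in> {1..\<kappa>} \<and> f \<in> {1..\<kappa>} \<and> c \<in> {1..\<kappa>} \<and> h \<in> {1..\<kappa>}")
       (auto intro!: sum.cong sum.neutral)
qed

lemma tres_tprod [simp]: "tres \<kappa> (tprod s \<kappa> X Y) = tprod s \<kappa> X Y"
  by (metis tprod_def tres_tmul tres_tres)

lemma tprod_tres_left [simp]: "tprod s \<kappa> (tres \<kappa> X) Y = tprod s \<kappa> X Y"
  by (simp add: tprod_def)

lemma tprod_tres_right [simp]: "tprod s \<kappa> X (tres \<kappa> Y) = tprod s \<kappa> X Y"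
  by (simp add: tprod_def)

lemma tprod_tmul_left: "tprod s \<kappa> (tmul s \<kappa> X Y) Z = tprod s \<kappa> (tprod s \<kappa> X Y) Z"
  by (metis tprod_tres_left tres_tmul)

lemma tprod_assoc: "tprod s \<kappa> (tprod s \<kappa> X Y) Z = tprod s \<kappa> X (tprod s \<kappa> Y Z)"
  by (metis tprod_def tres_tprod tmul_assoc)

lemma tres_tadd: "tres \<kappa> (tadd X Y) = tadd (tres \<kappa> X) (tres \<kappa> Y)"
  by (simp add: fun_eq_iff tres_def tadd_def)

lemma tres_tsub: "tres \<kappa> (tsub X Y) = tsub (tres \<kappa> X) (tres \<kappa> Y)"
  by (simp add: fun_eq_iff tres_def tsub_def)

lemma tprod_tadd_left: "tprod s \<kappa> (tadd X Y) Z = tadd (tprod s \<kappa> X Z) (tprod s \<kappa> Y Z)"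
  by (simp add: fun_eq_iff tprod_def tres_tadd tmul_tsign tadd_def distrib_left distrib_right sum.distrib)

lemma tprod_tadd_right: "tprod s \<kappa> X (tadd Y Z) = tadd (tprod s \<kappa> X Y) (tprod s \<kappa> X Z)"
  by (simp add: fun_eq_iff tprod_def tres_tadd tmul_tsign tadd_def distrib_left distrib_right sum.distrib)

lemma tprod_tsub_left: "tprod s \<kappa> (tsub X Y) Z = tsub (tprod s \<kappa> X Z) (tprod s \<kappa> Y Z)"
  by (simp add: fun_eq_iff tprod_def tres_tsub tmul_tsign tsub_def
      left_diff_distrib right_diff_distrib sum_subtractf)

lemma tprod_tsub_right: "tprod s \<kappa> X (tsub Y Z) = tsub (tprod s \<kappa> X Y) (tprod s \<kappa> X Z)"
  by (simp add: fun_eq_iff tprod_def tres_tsub tmul_tsign tsub_def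
      left_diff_distrib right_diff_distrib sum_subtractf)

definition tshift :: "nat \<Rightarrow> nat \<Rightarrow> 'a::ring_1 tser \<Rightarrow> 'a tser" where
  "tshift k l X n m a b c d = (if k \<le> n \<and> l \<le> m then X (n - k) (m - l) a b c d else 0)"

lemma tres_tshift: "tres \<kappa> (tshift k l X) = tshift k l (tres \<kappa> X)"
  by (simp add: fun_eq_iff tshift_def tres_def)

lemma tshift_tshift: "tshift k l (tshift k' l' X) = tshift (k + k') (l + l') X"
  by (auto simp: fun_eq_iff tshift_def diff_diff_left ac_simps)

lemma tshift_0_0 [simp]: "tshift 0 0 X = X"
  by (simp add: fun_eq_iff tshift_def)

lemma tshift_tadd: "tshift k l (tadd X Y) = tadd (tshift k l X) (tshift k l Y)"
  by (intro ext) (simp add: tshift_def tadd_def)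

lemma tshift_tsub: "tshift k l (tsub X Y) = tsub (tshift k l X) (tshift k l Y)"
  by (intro ext) (simp add: tshift_def tsub_def)

lemma tshift_inject: "tshift k l X = tshift k l Y \<Longrightarrow> X = Y"
proof (intro ext)
  fix n m a b c d
  assume "tshift k l X = tshift k l Y"
  then have "tshift k l X (n + k) (m + l) a b c d = tshift k l Y (n + k) (m + l) a b c d" by simp
  then show "X n m a b c d = Y n m a b c d" by (simp add: tshift_def)
qed

lemma tconst_eq_tshift: "tconst k l M = tshift k l (tconst 0 0 M)"
  by (auto simp: fun_eq_iff tshift_def tconst_def)

lemma tprod_Id_left: "tprod s \<kappa> (tconst k l Id2) X = tshift k l (tres \<kappa> X)"
proof (intro ext)
  fix n m a f c h
  show "tprod s \<kappa> (tconst k l Id2) X n m a f c h = tshift k l (tres \<kappa> X) n m a f c h"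
    unfolding tprod_def tmul_tsign
    by (subst sum4_collapse[where p'=k and q'=l and b'=a and d'=c and
          T="if a \<in> {1..\<kappa>} \<and> c \<in> {1..\<kappa>} then tres \<kappa> X (n - k) (m - l) a f c h else 0"])
       (auto simp: tres_def tconst_def Id2_def tshift_def tsign_def msign_even)
qed

lemma tprod_Id_right: "tprod s \<kappa> X (tconst k l Id2) = tshift k l (tres \<kappa> X)"
proof (intro ext)
  fix n m a f c h
  show "tprod s \<kappa> X (tconst k l Id2) n m a f c h = tshift k l (tres \<kappa> X) n m a f c h"
    unfolding tprod_def tmul_tsign
    by (subst sum4_collapse[where p'="n - k" and q'="m - l" and b'=f and d'=h and
          T="if k \<le> n \<and> l \<le> m \<and> f \<in> {1..\<kappa>} \<and> h \<in> {1..\<kappa>} then tres \<kappa> X (n - k) (m - l) a f c h else 0"])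
       (auto simp: tres_def tconst_def Id2_def tshift_def tsign_def msign_even)
qed

lemma tprod_Id_0_left [simp]: "tprod s \<kappa> (tconst 0 0 Id2) X = tres \<kappa> X"
  by (simp add: tprod_Id_left)

lemma tprod_Id_0_right [simp]: "tprod s \<kappa> X (tconst 0 0 Id2) = tres \<kappa> X"
  by (simp add: tprod_Id_right)

lemma tprod_tshift_left: "tprod s \<kappa> (tshift k l X) Y = tshift k l (tprod s \<kappa> X Y)"
proof -
  have "tprod s \<kappa> (tshift k l X) Y = tprod s \<kappa> (tprod s \<kappa> (tconst k l Id2) X) Y"
    by (metis tprod_Id_left tprod_tres_left tres_tshift)
  then show ?thesis by (simp only: tprod_assoc) (simp add: tprod_Id_left)
qed

lemma tprod_tshift_right: "tprod s \<kappa> X (tshift k l Y) = tshift k l (tprod s \<kappa> X Y)"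
proof -
  have "tprod s \<kappa> X (tshift k l Y) = tprod s \<kappa> X (tprod s \<kappa> (tconst k l Id2) Y)"
    by (metis tprod_Id_left tprod_tres_right tres_tshift)
  also have "\<dots> = tprod s \<kappa> (tshift k l (tres \<kappa> X)) Y"
    by (simp add: tprod_assoc[symmetric] tprod_Id_right)
  finally show ?thesis by (simp add: tprod_tshift_left)
qed

lemma tprod_tconst_left: "tprod s \<kappa> (tconst k l M) X = tshift k l (tprod s \<kappa> (tconst 0 0 M) X)"
  by (subst tconst_eq_tshift) (rule tprod_tshift_left)

lemma tprod_tconst_right: "tprod s \<kappa> X (tconst k l M) = tshift k l (tprod s \<kappa> X (tconst 0 0 M))"
  by (subst tconst_eq_tshift) (rule tprod_tshift_right)

lemma tprod_P_left: "tprod s \<kappa> (tconst k l (Pmat s)) X n m a f c h =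
  (if k \<le> n \<and> l \<le> m \<and> a \<in> {1..\<kappa>} \<and> c \<in> {1..\<kappa>}
   then tsign s a c c a f h * of_int (s c) * tres \<kappa> X (n - k) (m - l) c f a h else 0)"
  unfolding tprod_def tmul_tsign
  by (subst sum4_collapse[where p'=k and q'=l and b'=c and d'=a and
        T="if a \<in> {1..\<kappa>} \<and> c \<in> {1..\<kappa>} then tsign s a c c a f h * of_int (s c) * tres \<kappa> X (n - k) (m - l) c f a h else 0"])
     (auto simp: tres_def tconst_def Pmat_def)

lemma tprod_P_right: "tprod s \<kappa> X (tconst k l (Pmat s)) n m a f c h =
  (if k \<le> n \<and> l \<le> m \<and> f \<in> {1..\<kappa>} \<and> h \<in> {1..\<kappa>}
   then tsign s a h c f f h * tres \<kappa> X (n - k) (m - l) a h c f * of_int (s f) else 0)"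
  unfolding tprod_def tmul_tsign
  by (subst sum4_collapse[where p'="n - k" and q'="m - l" and b'=h and d'=f and
        T="if k \<le> n \<and> l \<le> m \<and> f \<in> {1..\<kappa>} \<and> h \<in> {1..\<kappa>} then tsign s a h c f f h * tres \<kappa> X (n - k) (m - l) a h c f * of_int (s f) else 0"])
     (auto simp: tres_def tconst_def Pmat_def)

lemma tprod_P_P:
  assumes "\<forall>i\<in>{1..\<kappa>}. s i = 1 \<or> s i = -1"
  shows "tprod s \<kappa> (tconst 0 0 (Pmat s)) (tconst 0 0 (Pmat s)) = (tres \<kappa> (tconst 0 0 Id2) :: 'a::ring_1 tser)"
proof (intro ext)
  fix n m a f c h
  have "tsign s a c c a a c * of_int (s c) * of_int (s a) = (1::'a)" if "a \<in> {1..\<kappa>}" "c \<in> {1..\<kappa>}"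
    using that assms unfolding tsign_def
    by (simp add: of_int_sign_eq_msign_par msign_add[symmetric])
       (rule msign_even, auto simp: even_add even_mult_iff)
  then show "tprod s \<kappa> (tconst 0 0 (Pmat s)) (tconst 0 0 (Pmat s)) n m a f c h = (tres \<kappa> (tconst 0 0 Id2) n m a f c h :: 'a)"
    by (auto simp: tprod_P_left tres_def tconst_def Pmat_def Id2_def)
qed

section \<open>The substitutions \<open>v = -u\<close> and \<open>u \<mapsto> -u\<close>\<close>

text \<open>Specialisation \<open>v = -u\<close>, i.e. \<open>y = -x\<close>; the result is a series in \<open>x\<close> alone.\<close>
definition tspec :: "'a::ring_1 tser \<Rightarrow> 'a tser" where
  "tspec X n m a b c d = (if m = 0 then (\<Sum>p\<le>n. msign (n - p) * X p (n - p) a b c d) else 0)"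

lemma tspec_tres: "tspec (tres \<kappa> X) = tres \<kappa> (tspec X)"
  by (intro ext) (auto simp: tspec_def tres_def)

lemma tspec_tadd: "tspec (tadd X Y) = tadd (tspec X) (tspec Y)"
  by (simp add: fun_eq_iff tspec_def tadd_def distrib_left sum.distrib)

lemma tspec_tsub: "tspec (tsub X Y) = tsub (tspec X) (tspec Y)"
  by (simp add: fun_eq_iff tspec_def tsub_def right_diff_distrib sum_subtractf)

lemma tspec_tconst: "tspec (tconst k l M) = tconst (k + l) 0 (\<lambda>a b c d. msign l * M a b c d)"
proof (intro ext)
  fix n m a b c d
  have "(\<Sum>p\<le>n. msign (n - p) * tconst k l M p (n - p) a b c d) =
        (\<Sum>p\<le>n. if p = k then (if n = k + l then msign l * M a b c d else 0) else 0)"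
    by (intro sum.cong refl) (auto simp: tconst_def)
  also have "\<dots> = (if n = k + l then msign l * M a b c d else 0)"
    by (simp add: sum.delta)
  finally have "(\<Sum>p\<le>n. msign (n - p) * tconst k l M p (n - p) a b c d) =
      (if n = k + l then msign l * M a b c d else 0)" .
  then show "tspec (tconst k l M) n m a b c d = tconst (k + l) 0 (\<lambda>a b c d. msign l * M a b c d) n m a b c d"
    unfolding tspec_def by (simp only:) (simp add: tconst_def)
qed

lemma tspec_tmul_expand: "tspec (tmul s \<kappa> X Y) n 0 a f c h =
  (\<Sum>i\<le>n. \<Sum>j\<le>n - i. \<Sum>k\<le>n - i - j. \<Sum>b\<in>{1..\<kappa>}. \<Sum>d\<in>{1..\<kappa>}.
     msign (n - i - k) * (tsign s a b c d f h * X i j a b c d * Y k (n - i - j - k) b f d h))"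
proof -
  define F where "F i t r = (\<Sum>q\<le>r. \<Sum>b\<in>{1..\<kappa>}. \<Sum>d\<in>{1..\<kappa>}.
     msign r * (tsign s a b c d f h * X i q a b c d * Y t (r - q) b f d h))" for i t r
  have "tspec (tmul s \<kappa> X Y) n 0 a f c h = (\<Sum>p\<le>n. \<Sum>i\<le>p. F i (p - i) (n - p))"
    unfolding tspec_def tmul_tsign F_def by (simp add: sum_distrib_left diff_diff_left)
  also have "\<dots> = (\<Sum>i\<le>n. \<Sum>t\<le>n - i. F i t (n - i - t))"
    by (rule sum_convolution3_reindex)
  also have "\<dots> = (\<Sum>i\<le>n. \<Sum>t\<le>n - i. \<Sum>j\<le>n - i - t. \<Sum>b\<in>{1..\<kappa>}. \<Sum>d\<in>{1..\<kappa>}.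
     msign (n - i - t) * (tsign s a b c d f h * X i j a b c d * Y t (n - i - j - t) b f d h))"
    unfolding F_def by (intro sum.cong refl) (simp add: diff_diff_left ac_simps)
  also have "\<dots> = (\<Sum>i\<le>n. \<Sum>j\<le>n - i. \<Sum>t\<le>n - i - j. \<Sum>b\<in>{1..\<kappa>}. \<Sum>d\<in>{1..\<kappa>}.
     msign (n - i - t) * (tsign s a b c d f h * X i j a b c d * Y t (n - i - j - t) b f d h))"
    by (rule sum.cong[OF refl], rule sum_triangle_swap)
  finally show ?thesis .
qed

lemma tmul_tspec_expand: "tmul s \<kappa> (tspec X) (tspec Y) n 0 a f c h =
  (\<Sum>i\<le>n. \<Sum>j\<le>n - i. \<Sum>k\<le>n - i - j. \<Sum>b\<in>{1..\<kappa>}. \<Sum>d\<in>{1..\<kappa>}.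
     msign (n - i - k) * (tsign s a b c d f h * X i j a b c d * Y k (n - i - j - k) b f d h))"
proof -
  let ?R = "{1..\<kappa>}"
  define F where "F i j r = (\<Sum>k\<le>r. \<Sum>b\<in>?R. \<Sum>d\<in>?R.
     msign (n - i - k) * (tsign s a b c d f h * X i j a b c d * Y k (r - k) b f d h))" for i j r
  have "tmul s \<kappa> (tspec X) (tspec Y) n 0 a f c h = (\<Sum>p\<le>n. \<Sum>b\<in>?R. \<Sum>d\<in>?R.
      tsign s a b c d f h * (\<Sum>i\<le>p. msign (p - i) * X i (p - i) a b c d)
      * (\<Sum>k\<le>n - p. msign (n - p - k) * Y k (n - p - k) b f d h))"
    unfolding tmul_tsign tspec_def by simp
  also have "\<dots> = (\<Sum>p\<le>n. \<Sum>i\<le>p. F i (p - i) (n - p))"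
  proof (rule sum.cong[OF refl])
    fix p assume "p \<in> {..n}"
    then have signs: "msign (p - i) * msign (n - p - k) = (msign (n - i - k) :: 'a)"
      if "i \<le> p" "k \<le> n - p" for i k
      using that by (simp add: msign_add[symmetric])
    show "(\<Sum>b\<in>?R. \<Sum>d\<in>?R. tsign s a b c d f h * (\<Sum>i\<le>p. msign (p - i) * X i (p - i) a b c d)
      * (\<Sum>k\<le>n - p. msign (n - p - k) * Y k (n - p - k) b f d h)) = (\<Sum>i\<le>p. F i (p - i) (n - p))"
      unfolding sum_mult_sum_reorder F_def
      by (intro sum.cong refl)
         (simp only: mult_central_factors[OF msign_commute msign_commute] signs atMost_iff)
  qed
  also have "\<dots> = (\<Sum>i\<le>n. \<Sum>j\<le>n - i. F i j (n - i - j))"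
    by (rule sum_convolution3_reindex)
  finally show ?thesis unfolding F_def by (simp add: diff_diff_left)
qed

lemma tspec_tmul: "tspec (tmul s \<kappa> X Y) = tmul s \<kappa> (tspec X) (tspec Y)"
proof (intro ext)
  fix n m a f c h
  show "tspec (tmul s \<kappa> X Y) n m a f c h = tmul s \<kappa> (tspec X) (tspec Y) n m a f c h"
  proof (cases "m = 0")
    case True
    then show ?thesis by (simp only: tspec_tmul_expand tmul_tspec_expand)
  next
    case False
    then show ?thesis
      unfolding tmul_tsign by (auto simp: tspec_def intro!: sum.neutral)
  qed
qed

lemma tspec_tprod: "tspec (tprod s \<kappa> X Y) = tprod s \<kappa> (tspec X) (tspec Y)"
  by (simp add: tprod_def tspec_tmul tspec_tres)

definition tneg_u :: "'a::ring_1 tser \<Rightarrow> 'a tser" where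
  "tneg_u X n m a b c d = msign n * X n m a b c d"

lemma tneg_u_tneg_u: "tneg_u (tneg_u X) = X"
  by (simp add: fun_eq_iff tneg_u_def mult.assoc[symmetric] msign_mult_self)

lemma tneg_u_tres: "tneg_u (tres \<kappa> X) = tres \<kappa> (tneg_u X)"
  by (simp add: fun_eq_iff tneg_u_def tres_def)

lemma tneg_u_tadd: "tneg_u (tadd X Y) = tadd (tneg_u X) (tneg_u Y)"
  by (simp add: fun_eq_iff tneg_u_def tadd_def distrib_left)

lemma tneg_u_tsub: "tneg_u (tsub X Y) = tsub (tneg_u X) (tneg_u Y)"
  by (simp add: fun_eq_iff tneg_u_def tsub_def right_diff_distrib)

lemma tneg_u_tconst: "tneg_u (tconst k l M) = tconst k l (\<lambda>a b c d. msign k * M a b c d)"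
  by (simp add: fun_eq_iff tneg_u_def tconst_def)

lemma tneg_u_tmul: "tneg_u (tmul s \<kappa> X Y) = tmul s \<kappa> (tneg_u X) (tneg_u Y)"
proof (intro ext)
  fix n m a f c h
  show "tneg_u (tmul s \<kappa> X Y) n m a f c h = tmul s \<kappa> (tneg_u X) (tneg_u Y) n m a f c h"
    unfolding tneg_u_def tmul_tsign sum_distrib_left
  proof (intro sum.cong refl)
    fix p q b d assume "p \<in> {..n}"
    then have "msign n = (msign p * msign (n - p) :: 'a)" by (simp add: msign_add[symmetric])
    then show "msign n * (tsign s a b c d f h * X p q a b c d * Y (n - p) (m - q) b f d h) =
          tsign s a b c d f h * (msign p * X p q a b c d) * (msign (n - p) * Y (n - p) (m - q) b f d h)"
      by (simp only: mult_central_factors[OF msign_commute msign_commute])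
  qed
qed

lemma tneg_u_tprod: "tneg_u (tprod s \<kappa> X Y) = tprod s \<kappa> (tneg_u X) (tneg_u Y)"
  by (simp add: tprod_def tneg_u_tmul tneg_u_tres)

lemma tspec_B1: "tspec (B1 s eps b) = B1 s eps b"
proof (intro ext)
  fix n m a f c h
  show "tspec (B1 s eps b) n m a f c h = B1 s eps b n m a f c h"
  proof (cases "m = 0")
    case True
    have "(\<Sum>p\<le>n. msign (n - p) * B1 s eps b p (n - p) a f c h) =
        (\<Sum>p\<le>n. if p = n then B1 s eps b n 0 a f c h else 0)"
      by (intro sum.cong refl) (auto simp: B1_def msign_def)
    then show ?thesis using True by (simp add: tspec_def)
  qed (simp add: tspec_def B1_def)
qed

lemma tspec_B2: "tspec (B2 s eps b) n m a a' k l =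
   (if m = 0 \<and> a = a' then msign n * (msign (par s k * par s l + par s l) * bser b eps k l n) else 0)"
proof (cases "m = 0")
  case True
  have "(\<Sum>p\<le>n. msign (n - p) * B2 s eps b p (n - p) a a' k l) =
       (\<Sum>p\<le>n. if p = 0 then msign n * B2 s eps b 0 n a a' k l else 0)"
    by (intro sum.cong refl) (auto simp: B2_def)
  then show ?thesis using True by (simp add: tspec_def B2_def)
qed (simp add: tspec_def)

lemma tneg_u_B2 [simp]: "tneg_u (B2 s eps b) = B2 s eps b"
  by (simp add: fun_eq_iff tneg_u_def B2_def msign_def)

lemma tspec_Rplus: "tspec (Rplus s) = tconst 2 0 (Pmat s)"
  unfolding Rplus_def tspec_tsub tspec_tadd tspec_tconst
  by (intro ext) (simp add: tsub_def tadd_def tconst_def msign_def)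

lemma tspec_Rminus:
  "tspec (Rminus s) = tsub (tconst 2 0 (Pmat s)) (tadd (tconst 1 0 Id2) (tconst 1 0 Id2))"
  unfolding Rminus_def tspec_tsub tspec_tadd tspec_tconst
  by (intro ext) (simp add: tsub_def tadd_def tconst_def msign_def)

section \<open>\<open>B(u) B(-u)\<close> is scalar\<close>

lemma reflection_eq_tprod:
  assumes "reflection_eq \<kappa> s eps b"
  shows "tprod s \<kappa> (tprod s \<kappa> (tprod s \<kappa> (Rminus s) (B1 s eps b)) (Rplus s)) (B2 s eps b)
       = tprod s \<kappa> (tprod s \<kappa> (tprod s \<kappa> (B2 s eps b) (Rplus s)) (B1 s eps b)) (Rminus s)"
proof -
  have "tres \<kappa> (tmul s \<kappa> (tmul s \<kappa> (tmul s \<kappa> (Rminus s) (B1 s eps b)) (Rplus s)) (B2 s eps b))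
      = tres \<kappa> (tmul s \<kappa> (tmul s \<kappa> (tmul s \<kappa> (B2 s eps b) (Rplus s)) (B1 s eps b)) (Rminus s))"
    using assms unfolding reflection_eq_def by (intro ext) (simp add: tres_def)
  then show ?thesis by (simp add: tres_tmul tprod_tmul_left)
qed

lemma tprod_P_tspec_B2:
  "tprod s \<kappa> (tconst 0 0 (Pmat s)) (tspec (B2 s eps b)) = tprod s \<kappa> (tneg_u (B1 s eps b)) (tconst 0 0 (Pmat s))"
proof (intro ext)
  fix n m a f c h
  have "tsign s a f f a f h = (1::'a)" "tsign s a h f f f h = (1::'a)"
    unfolding tsign_def by (rule msign_even, auto simp: even_add even_mult_iff)+
  then show "tprod s \<kappa> (tconst 0 0 (Pmat s)) (tspec (B2 s eps b)) n m a f c h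
      = tprod s \<kappa> (tneg_u (B1 s eps b)) (tconst 0 0 (Pmat s)) n m a f c h"
    by (auto simp: tprod_P_left tprod_P_right tres_def tspec_B2 tneg_u_def B1_def mult_of_int_commute)
qed

lemma tprod_tspec_B2_P:
  assumes "\<forall>i\<in>{1..\<kappa>}. s i = 1 \<or> s i = -1"
  shows "tprod s \<kappa> (tspec (B2 s eps b)) (tconst 0 0 (Pmat s)) = tprod s \<kappa> (tconst 0 0 (Pmat s)) (tneg_u (B1 s eps b))"
proof (intro ext)
  fix n m a f c h
  show "tprod s \<kappa> (tspec (B2 s eps b)) (tconst 0 0 (Pmat s)) n m a f c h
      = tprod s \<kappa> (tconst 0 0 (Pmat s)) (tneg_u (B1 s eps b)) n m a f c h"
  proof (cases "m = 0 \<and> h = a \<and> a \<in> {1..\<kappa>} \<and> f \<in> {1..\<kappa>} \<and> c \<in> {1..\<kappa>}")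
    case True
    then have "c \<in> {1..\<kappa>}" "f \<in> {1..\<kappa>}" by auto
    then have signs: "tsign s a a c f f a * of_int (s f) = (tsign s a c c a f a * of_int (s c) :: 'a)"
      using assms unfolding tsign_def
      by (simp add: of_int_sign_eq_msign_par msign_add[symmetric], intro msign_cong)
         (auto simp: even_add even_mult_iff)
    let ?V = "msign n * (msign (par s c * par s f + par s f) * bser b eps c f n) :: 'a"
    have "tprod s \<kappa> (tspec (B2 s eps b)) (tconst 0 0 (Pmat s)) n m a f c h = tsign s a a c f f a * ?V * of_int (s f)"
      using True by (simp add: tprod_P_right tres_def tspec_B2)
    also have "\<dots> = tsign s a a c f f a * of_int (s f) * ?V"
      by (simp only: mult.assoc mult_of_int_commute)
    also have "\<dots> = tsign s a c c a f a * of_int (s c) * ?V"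
      by (simp only: signs)
    also have "\<dots> = tprod s \<kappa> (tconst 0 0 (Pmat s)) (tneg_u (B1 s eps b)) n m a f c h"
      using True by (simp add: tprod_P_left tres_def tneg_u_def B1_def)
    finally show ?thesis .
  next
    case False
    then show ?thesis
      by (auto simp: tprod_P_left tprod_P_right tres_def tspec_B2 tneg_u_def B1_def)
  qed
qed

text \<open>The series \<open>B(u) B(-u)\<close>, placed in the first tensor factor.\<close>
definition BB1 :: "(nat \<Rightarrow> int) \<Rightarrow> nat \<Rightarrow> (nat \<Rightarrow> int) \<Rightarrow> (nat \<Rightarrow> nat \<Rightarrow> nat \<Rightarrow> 'a::ring_1) \<Rightarrow> 'a tser" where
  "BB1 s \<kappa> eps b = tprod s \<kappa> (B1 s eps b) (tneg_u (B1 s eps b))"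

lemma tres_BB1 [simp]: "tres \<kappa> (BB1 s \<kappa> eps b) = BB1 s \<kappa> eps b"
  by (simp add: BB1_def)

lemma reflection_eq_at_v_neg_u:
  assumes spm: "\<forall>i\<in>{1..\<kappa>}. s i = 1 \<or> s i = -1"
    and RE: "reflection_eq \<kappa> s eps b"
  defines "M \<equiv> tspec (Rminus s)" and "P \<equiv> tconst 0 0 (Pmat s)"
  shows "tprod s \<kappa> (tprod s \<kappa> M (BB1 s \<kappa> eps b)) P
       = (tprod s \<kappa> P (tprod s \<kappa> (tneg_u (BB1 s \<kappa> eps b)) M) :: 'a::ring_1 tser)"
proof -
  let ?B1 = "B1 s eps b :: 'a tser" and ?N1 = "tneg_u (B1 s eps b) :: 'a tser"
    and ?D2 = "tspec (B2 s eps b) :: 'a tser"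
  have "tprod s \<kappa> (tprod s \<kappa> (tprod s \<kappa> M ?B1) (tconst 2 0 (Pmat s))) ?D2
      = tprod s \<kappa> (tprod s \<kappa> (tprod s \<kappa> ?D2 (tconst 2 0 (Pmat s))) ?B1) M"
    using arg_cong[OF reflection_eq_tprod[OF RE], of tspec]
    by (simp add: tspec_tprod tspec_B1 tspec_Rplus M_def)
  then have "tshift 2 0 (tprod s \<kappa> (tprod s \<kappa> (tprod s \<kappa> M ?B1) P) ?D2)
      = tshift 2 0 (tprod s \<kappa> (tprod s \<kappa> (tprod s \<kappa> ?D2 P) ?B1) M)"
    by (simp only: tprod_tconst_right[of s \<kappa> _ 2 0 "Pmat s"] tprod_tshift_left P_def)
  then have "tprod s \<kappa> (tprod s \<kappa> (tprod s \<kappa> M ?B1) P) ?D2 = tprod s \<kappa> (tprod s \<kappa> (tprod s \<kappa> ?D2 P) ?B1) M"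
    by (rule tshift_inject)
  moreover have "tprod s \<kappa> (tprod s \<kappa> (tprod s \<kappa> M ?B1) P) ?D2 = tprod s \<kappa> M (tprod s \<kappa> ?B1 (tprod s \<kappa> ?N1 P))"
    by (simp add: tprod_assoc tprod_P_tspec_B2 P_def)
  moreover have "tprod s \<kappa> (tprod s \<kappa> (tprod s \<kappa> ?D2 P) ?B1) M = tprod s \<kappa> P (tprod s \<kappa> ?N1 (tprod s \<kappa> ?B1 M))"
    by (simp add: tprod_assoc tprod_tspec_B2_P[OF spm] P_def)
  ultimately show ?thesis
    by (simp add: tprod_assoc BB1_def tneg_u_tprod tneg_u_tneg_u)
qed

lemma BB1_eq: "BB1 s \<kappa> eps b n m a f c h =
  (if a \<in> {1..\<kappa>} \<and> f \<in> {1..\<kappa>} \<and> c \<in> {1..\<kappa>} \<and> h \<in> {1..\<kappa>} \<and> m = 0 \<and> c = h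
   then BBminus \<kappa> s eps b n a f else (0::'a::ring_1))"
proof (cases "a \<in> {1..\<kappa>} \<and> f \<in> {1..\<kappa>} \<and> c \<in> {1..\<kappa>} \<and> h \<in> {1..\<kappa>} \<and> m = 0 \<and> c = h")
  case True
  have "BB1 s \<kappa> eps b n m a f c h = (\<Sum>p\<le>n. \<Sum>j\<in>{1..\<kappa>}.
        msign ((par s a + par s j) * (par s j + par s f))
        * (msign (par s a * par s j + par s j) * bser b eps a j p)
        * (msign (par s j * par s f + par s f) * msign (n - p) * bser b eps j f (n - p)))"
    unfolding BB1_def tprod_def tmul_tsign
  proof (subst sum4_collapse_partial)
    fix p q j d assume "q \<le> m" "j \<in> {1..\<kappa>}" "d \<in> {1..\<kappa>}"
    have "tsign s a j h h f h = (msign ((par s a + par s j) * (par s j + par s f)) :: 'a)"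
      unfolding tsign_def by (intro msign_cong) (auto simp: even_add even_mult_iff)
    then show "tsign s a j c d f h * tres \<kappa> (B1 s eps b) p q a j c d * tres \<kappa> (tneg_u (B1 s eps b)) (n - p) (m - q) j f d h =
        (if q = 0 \<and> d = c then msign ((par s a + par s j) * (par s j + par s f))
        * (msign (par s a * par s j + par s j) * bser b eps a j p)
        * (msign (par s j * par s f + par s f) * msign (n - p) * bser b eps j f (n - p)) else 0)"
      using True \<open>j \<in> _\<close> \<open>d \<in> _\<close> \<open>q \<le> m\<close>
      by (auto simp: tres_def B1_def tneg_u_def mult.assoc msign_commute[of "n - p"])
  qed (use True in simp_all)
  then show ?thesis using True by (simp add: BBminus_def)
next
  case False
  then have "tres \<kappa> (BB1 s \<kappa> eps b) n m a f c h = 0"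
    unfolding tres_def BB1_def tprod_def tmul_tsign
    by (auto intro!: sum.neutral simp: tres_def B1_def tneg_u_def)
  then show ?thesis using False by (simp only: tres_BB1 if_False)
qed

lemma tprod_spec_Rminus_P_coeff:
  assumes "a \<in> {1..\<kappa>}" "f \<in> {1..\<kappa>}" "c \<in> {1..\<kappa>}" "h \<in> {1..\<kappa>}"
  shows "tprod s \<kappa> (tprod s \<kappa> (tspec (Rminus s)) X) (tconst 0 0 (Pmat s)) N 0 a f c h
    = tsign s a h c f f h
      * ((if 2 \<le> N then tsign s a c c a h f * of_int (s c) * tres \<kappa> X (N - 2) 0 c h a f else 0)
         - ((if 1 \<le> N then tres \<kappa> X (N - 1) 0 a h c f else 0) + (if 1 \<le> N then tres \<kappa> X (N - 1) 0 a h c f else 0)))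
      * of_int (s f)"
  using assms by (simp add: tspec_Rminus tprod_P_right tprod_P_left tprod_tsub_left tprod_tadd_left tprod_Id_left
      tres_tshift tres_tsub tres_tadd tsub_def tadd_def tshift_def ring_distribs mult.assoc)

lemma tprod_P_spec_Rminus_coeff:
  assumes "a \<in> {1..\<kappa>}" "f \<in> {1..\<kappa>}" "c \<in> {1..\<kappa>}" "h \<in> {1..\<kappa>}"
  shows "tprod s \<kappa> (tconst 0 0 (Pmat s)) (tprod s \<kappa> Y (tspec (Rminus s))) N 0 a f c h
    = tsign s a c c a f h * of_int (s c)
      * ((if 2 \<le> N then tsign s c h a f f h * tres \<kappa> Y (N - 2) 0 c h a f * of_int (s f) else 0)
         - ((if 1 \<le> N then tres \<kappa> Y (N - 1) 0 c f a h else 0) + (if 1 \<le> N then tres \<kappa> Y (N - 1) 0 c f a h else 0)))"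
  using assms by (simp add: tspec_Rminus tprod_P_right tprod_P_left tprod_tsub_right tprod_tadd_right tprod_Id_right
      tres_tshift tres_tsub tres_tadd tsub_def tadd_def tshift_def ring_distribs mult.assoc)

lemma reflection_eq_coeff:
  assumes spm: "\<forall>i\<in>{1..\<kappa>}. s i = 1 \<or> s i = -1"
    and RE: "reflection_eq \<kappa> s eps b"
    and idx: "a \<in> {1..\<kappa>}" "f \<in> {1..\<kappa>}" "c \<in> {1..\<kappa>}" "h \<in> {1..\<kappa>}"
  shows "tsign s a h c f f h
      * ((if 1 \<le> N then tsign s a c c a h f * of_int (s c) * BB1 s \<kappa> eps b (N - 1) 0 c h a f else 0)
         - (BB1 s \<kappa> eps b N 0 a h c f + BB1 s \<kappa> eps b N 0 a h c f)) * of_int (s f)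
    = tsign s a c c a f h * of_int (s c)
      * ((if 1 \<le> N then tsign s c h a f f h * tneg_u (BB1 s \<kappa> eps b) (N - 1) 0 c h a f * of_int (s f) else 0)
         - (tneg_u (BB1 s \<kappa> eps b) N 0 c f a h + tneg_u (BB1 s \<kappa> eps b) N 0 c f a h))"
proof -
  have res: "tres \<kappa> (tneg_u (BB1 s \<kappa> eps b)) = tneg_u (BB1 s \<kappa> eps b)"
    by (simp add: tneg_u_tres[symmetric])
  have arith: "(2 \<le> Suc N) = (1 \<le> N)" "Suc N - 2 = N - 1" "Suc N - 1 = N" "1 \<le> Suc N"
    by auto
  show ?thesis
    using reflection_eq_at_v_neg_u[OF spm RE, THEN fun_cong, of "Suc N", THEN fun_cong, of 0, THEN fun_cong, of a,
        THEN fun_cong, of f, THEN fun_cong, of c, THEN fun_cong, of h]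
    by (simp only: tprod_spec_Rminus_P_coeff[OF idx] tprod_P_spec_Rminus_coeff[OF idx] res tres_BB1 arith if_True)
qed

lemma C_algebra_add_self_eq_0:
  assumes "is_C_algebra (phi :: complex \<Rightarrow> 'a::ring_1)" and "y + y = (0::'a)"
  shows "y = 0"
proof -
  have "phi (1/2) + phi (1/2) = phi (1/2 + 1/2)"
    using assms(1) unfolding is_C_algebra_def by metis
  also have "\<dots> = 1"
    using assms(1) unfolding is_C_algebra_def by simp
  finally have "phi (1/2) + phi (1/2) = 1" .
  then have "y = phi (1/2) * (y + y)"
    by (metis distrib_left distrib_right mult_1_left)
  with assms(2) show ?thesis by simp
qed

lemma of_int_sign_mult_self: "s i = 1 \<or> s i = -1 \<Longrightarrow> (of_int (s i) * of_int (s i) :: 'a::ring_1) = 1"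
  by auto

lemma tsign_sign_mult_eq_0_iff:
  assumes "s i = 1 \<or> s i = -1"
  shows "tsign s a b c d f h * x * of_int (s i) = 0 \<longleftrightarrow> x = (0::'a::ring_1)"
proof
  assume "tsign s a b c d f h * x * of_int (s i) = 0"
  then have "tsign s a b c d f h * (tsign s a b c d f h * x * of_int (s i)) * of_int (s i) = 0" by simp
  then show "x = 0"
    by (simp only: mult.assoc[symmetric] tsign_mult_self mult_1_left)
       (simp only: mult.assoc of_int_sign_mult_self[of s i, OF assms] mult_1_right)
qed simp

lemma BBminus_offdiag:
  assumes spm: "\<forall>i\<in>{1..\<kappa>}. s i = 1 \<or> s i = -1"
    and RE: "reflection_eq \<kappa> s eps b" and phi: "is_C_algebra (phi :: complex \<Rightarrow> 'a::ring_1)"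
    and idx: "a \<in> {1..\<kappa>}" "h \<in> {1..\<kappa>}" and "a \<noteq> h"
  shows "BBminus \<kappa> s eps b n a h = (0::'a)"
proof -
  let ?x = "BBminus \<kappa> s eps b n a h :: 'a"
  have "tsign s a h h h h h * (- ?x - ?x) * of_int (s h) = 0"
    using \<open>a \<noteq> h\<close> idx reflection_eq_coeff[OF spm RE idx(1) idx(2) idx(2) idx(2), of n]
    by (simp add: BB1_eq tneg_u_def cong: if_cong)
  then have "- ?x - ?x = 0"
    using spm idx by (simp add: tsign_sign_mult_eq_0_iff)
  then have "?x + ?x = 0"
    by (metis minus_add_distrib diff_conv_add_uminus neg_equal_0_iff_equal)
  then show ?thesis
    by (rule C_algebra_add_self_eq_0[OF phi])
qed

lemma C_algebra_add_self_cancel: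
  assumes "is_C_algebra (phi :: complex \<Rightarrow> 'a::ring_1)" and "x + x = y + (y::'a)"
  shows "x = y"
proof -
  have "(x - y) + (x - y) = 0"
    using assms(2) by (simp only: add_diff_add[symmetric] diff_self)
  then have "x - y = 0"
    by (rule C_algebra_add_self_eq_0[OF assms(1)])
  then show ?thesis
    by simp
qed

lemma mult_of_int_sign_cancel:
  assumes "s i = 1 \<or> s i = -1"
  shows "x * of_int (s i) = y * of_int (s i) \<longleftrightarrow> x = (y::'a::ring_1)"
proof
  assume "x * of_int (s i) = y * of_int (s i)"
  then have "x * (of_int (s i) * of_int (s i)) = y * (of_int (s i) * of_int (s i))"
    by (simp only: mult.assoc[symmetric])
  then show "x = y"
    by (simp only: of_int_sign_mult_self[of s i, OF assms] mult_1_right)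
qed simp

lemma BBminus_diag_flip:
  assumes spm: "\<forall>i\<in>{1..\<kappa>}. s i = 1 \<or> s i = -1"
    and RE: "reflection_eq \<kappa> s eps b" and phi: "is_C_algebra (phi :: complex \<Rightarrow> 'a::ring_1)"
    and idx: "a \<in> {1..\<kappa>}" "h \<in> {1..\<kappa>}" and "a \<noteq> h"
  shows "BBminus \<kappa> s eps b n a a = msign n * (BBminus \<kappa> s eps b n h h :: 'a)"
proof -
  let ?x = "BBminus \<kappa> s eps b n a a :: 'a" and ?y = "msign n * BBminus \<kappa> s eps b n h h :: 'a"
  have signs: "tsign s a a h h h a = (1::'a)" "tsign s a h h a h a = (1::'a)"
    unfolding tsign_def by (rule msign_even, auto simp: even_add even_mult_iff)+
  have "(- ?x - ?x) * of_int (s h) = of_int (s h) * (- ?y - ?y)"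
    using \<open>a \<noteq> h\<close> idx reflection_eq_coeff[OF spm RE idx(1) idx(2) idx(2) idx(1), of n]
    by (simp add: BB1_eq tneg_u_def signs cong: if_cong)
  then have "(- ?x - ?x) * of_int (s h) = (- ?y - ?y) * of_int (s h)"
    by (simp only: mult_of_int_commute)
  moreover have "s h = 1 \<or> s h = -1"
    using spm idx by blast
  ultimately have "- ?x - ?x = - ?y - ?y"
    by (simp only: mult_of_int_sign_cancel)
  then have "?x + ?x = ?y + ?y"
    by (metis minus_add_distrib diff_conv_add_uminus neg_equal_iff_equal)
  then show ?thesis
    by (rule C_algebra_add_self_cancel[OF phi])
qed

lemma BBminus_diag_odd:
  assumes spm: "\<forall>i\<in>{1..\<kappa>}. s i = 1 \<or> s i = -1"
    and RE: "reflection_eq \<kappa> s eps b" and phi: "is_C_algebra (phi :: complex \<Rightarrow> 'a::ring_1)"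
    and idx: "a \<in> {1..\<kappa>}" and "odd k"
  shows "BBminus \<kappa> s eps b k a a = (0 :: 'a)"
proof -
  let ?x = "BBminus \<kappa> s eps b k a a :: 'a" and ?y = "BBminus \<kappa> s eps b (k - 1) a a :: 'a"
    and ?s = "of_int (s a) :: 'a"
  have sign: "tsign s a a a a a a = (1::'a)"
    unfolding tsign_def by (rule msign_even, auto simp: even_add even_mult_iff)
  have "1 \<le> k" "msign (k - 1) = (1::'a)" "msign k = (-1::'a)"
    using \<open>odd k\<close> by (auto simp: msign_even msign_odd elim: oddE)
  then have "(?s * ?y - (?x + ?x)) * ?s = ?s * (?y * ?s - (- ?x - ?x))"
    using idx reflection_eq_coeff[OF spm RE idx idx idx idx, of k]
    by (simp add: BB1_eq tneg_u_def sign)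
  then have "?s * ?y * ?s - (?x + ?x) * ?s = ?s * ?y * ?s + ?s * (?x + ?x)"
    by (simp add: algebra_simps)
  then have "- ((?x + ?x) * ?s) = (?x + ?x) * ?s"
    by (simp add: mult_of_int_commute)
  then have "(?x + ?x) * ?s + (?x + ?x) * ?s = 0"
    by (metis add.left_inverse)
  then have "(?x + ?x) * ?s = 0"
    by (rule C_algebra_add_self_eq_0[OF phi])
  then have "(?x + ?x) * ?s = 0 * ?s"
    by simp
  moreover have "s a = 1 \<or> s a = -1"
    using spm idx by blast
  ultimately have "?x + ?x = 0"
    by (simp only: mult_of_int_sign_cancel)
  then show ?thesis
    by (rule C_algebra_add_self_eq_0[OF phi])
qed

lemma BBminus_scalar:
  assumes spm: "\<forall>i\<in>{1..\<kappa>}. s i = 1 \<or> s i = -1"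
    and RE: "reflection_eq \<kappa> s eps b" and phi: "is_C_algebra (phi :: complex \<Rightarrow> 'a::ring_1)"
    and idx: "i \<in> {1..\<kappa>}" "l \<in> {1..\<kappa>}"
  shows "BBminus \<kappa> s eps b n i l = (if i = l then BBminus \<kappa> s eps b n 1 1 else (0::'a))"
proof (cases "i = l")
  case False
  then show ?thesis using BBminus_offdiag[OF spm RE phi idx] by simp
next
  case True
  have one: "1 \<in> {1..\<kappa>}" using idx by auto
  show ?thesis
  proof (cases "i = 1")
    case False
    then have flip: "BBminus \<kappa> s eps b n i i = msign n * (BBminus \<kappa> s eps b n 1 1 :: 'a)"
      using BBminus_diag_flip[OF spm RE phi idx(1) one] by simp
    show ?thesis
    proof (cases "even n")
      case True
      then show ?thesis using flip \<open>i = l\<close> by (simp add: msign_even)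
    next
      case False
      then show ?thesis
        using \<open>i = l\<close> BBminus_diag_odd[OF spm RE phi idx(1)] BBminus_diag_odd[OF spm RE phi one] by simp
    qed
  qed (use True in simp)
qed

lemma BB1_scalar:
  assumes spm: "\<forall>i\<in>{1..\<kappa>}. s i = 1 \<or> s i = -1"
    and RE: "reflection_eq \<kappa> s eps b" and phi: "is_C_algebra (phi :: complex \<Rightarrow> 'a::ring_1)"
  shows "BB1 s \<kappa> eps b n m x y z w =
    (if x \<in> {1..\<kappa>} \<and> y \<in> {1..\<kappa>} \<and> z \<in> {1..\<kappa>} \<and> w \<in> {1..\<kappa>} \<and> m = 0 \<and> z = w \<and> x = y
     then BBminus \<kappa> s eps b n 1 1 else (0::'a))"
  using BB1_eq[of s \<kappa> eps b n m x y z w] BBminus_scalar[OF spm RE phi, of x y n] by auto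

section \<open>Centrality of the scalar\<close>

lemma BB1_commute_P:
  assumes spm: "\<forall>i\<in>{1..\<kappa>}. s i = 1 \<or> s i = -1"
    and RE: "reflection_eq \<kappa> s eps b" and phi: "is_C_algebra (phi :: complex \<Rightarrow> 'a::ring_1)"
  shows "tprod s \<kappa> (tconst 0 0 (Pmat s)) (BB1 s \<kappa> eps b) = (tprod s \<kappa> (BB1 s \<kappa> eps b) (tconst 0 0 (Pmat s)) :: 'a tser)"
proof (intro ext)
  fix n m a f c h
  have "tsign s x x y y y x = (1::'a)" "tsign s x y y x y x = (1::'a)" for x y
    unfolding tsign_def by (rule msign_even, auto simp: even_add even_mult_iff)+
  then show "tprod s \<kappa> (tconst 0 0 (Pmat s)) (BB1 s \<kappa> eps b) n m a f c h = tprod s \<kappa> (BB1 s \<kappa> eps b) (tconst 0 0 (Pmat s)) n m a f c h"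
    using mult_of_int_commute[of "s _" "BBminus \<kappa> s eps b n 1 1 :: 'a"]
    by (simp add: tprod_P_left tprod_P_right BB1_scalar[OF spm RE phi])
qed

lemma tprod_commute_R:
  assumes "tres \<kappa> X = X" and "tprod s \<kappa> (tconst 0 0 (Pmat s)) X = tprod s \<kappa> X (tconst 0 0 (Pmat s))"
  shows "tprod s \<kappa> (Rplus s) X = tprod s \<kappa> X (Rplus s)" "tprod s \<kappa> (Rminus s) X = tprod s \<kappa> X (Rminus s)"
  unfolding Rplus_def Rminus_def
  by (simp_all only: tprod_tsub_left tprod_tsub_right tprod_tadd_left tprod_tadd_right tprod_Id_left tprod_Id_right
      tprod_tconst_left[of s \<kappa> 1 1 "Pmat s"] tprod_tconst_right[of s \<kappa> _ 1 1 "Pmat s"] assms)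

lemma tneg_u_Rplus: "tneg_u (Rplus s) = tadd (tsub (tconst 0 1 Id2) (tconst 1 0 Id2)) (tconst 1 1 (Pmat s))"
  unfolding Rplus_def tneg_u_tsub tneg_u_tadd tneg_u_tconst
  by (intro ext) (simp add: tsub_def tadd_def tconst_def msign_def)

lemma tneg_u_Rminus: "tneg_u (Rminus s) = tadd (tadd (tconst 0 1 Id2) (tconst 1 0 Id2)) (tconst 1 1 (Pmat s))"
  unfolding Rminus_def tneg_u_tsub tneg_u_tadd tneg_u_tconst
  by (intro ext) (simp add: tsub_def tadd_def tconst_def msign_def)

text \<open>Multiplication by the central series \<open>x\<^sup>2 + k x y + y\<^sup>2 - x\<^sup>2 y\<^sup>2\<close>. For \<open>k = \<mp>2\<close> this is
  the unitarity \<open>R(w) R(-w) = 1 - w\<^sup>-\<^sup>2\<close> of the \<open>R\<close>-matrix after the rescaling used in \<open>reflection_eq\<close>.\<close>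
definition RR_scalar :: "int \<Rightarrow> 'a::ring_1 tser \<Rightarrow> 'a tser" where
  "RR_scalar k X n m a b c d = tshift 0 2 X n m a b c d + tshift 2 0 X n m a b c d
     + of_int k * tshift 1 1 X n m a b c d - tshift 2 2 X n m a b c d"

lemma tprod_P_P_left:
  assumes "\<forall>i\<in>{1..\<kappa>}. s i = 1 \<or> s i = -1"
  shows "tprod s \<kappa> (tconst 0 0 (Pmat s)) (tprod s \<kappa> (tconst 0 0 (Pmat s)) Y) = (tres \<kappa> Y :: 'a::ring_1 tser)"
  by (simp add: tprod_assoc[symmetric] tprod_P_P[OF assms])

lemma tprod_Rminus_neg_Rplus:
  assumes spm: "\<forall>i\<in>{1..\<kappa>}. s i = 1 \<or> s i = -1"
  shows "tprod s \<kappa> (Rminus s) (tprod s \<kappa> (tneg_u (Rplus s)) Z) = (RR_scalar (-2) (tres \<kappa> Z) :: 'a::ring_1 tser)"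
  unfolding Rminus_def tneg_u_Rplus
  by (simp only: tprod_tsub_left tprod_tadd_left tprod_tsub_right tprod_tadd_right tprod_Id_left
      tprod_tconst_left[of s \<kappa> 1 1 "Pmat s"] tprod_tshift_right tprod_tres_right tprod_P_P_left[OF spm]
      tres_tsub tres_tadd tres_tshift tres_tres tres_tprod tshift_tshift tshift_tsub tshift_tadd,
      intro ext, simp add: RR_scalar_def tsub_def tadd_def tshift_def algebra_simps mult_2 numeral_2_eq_2)

lemma tprod_Rplus_neg_Rminus:
  assumes spm: "\<forall>i\<in>{1..\<kappa>}. s i = 1 \<or> s i = -1"
  shows "tprod s \<kappa> (Rplus s) (tprod s \<kappa> (tneg_u (Rminus s)) Z) = (RR_scalar 2 (tres \<kappa> Z) :: 'a::ring_1 tser)"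
  unfolding Rplus_def tneg_u_Rminus
  by (simp only: tprod_tsub_left tprod_tadd_left tprod_tsub_right tprod_tadd_right tprod_Id_left
      tprod_tconst_left[of s \<kappa> 1 1 "Pmat s"] tprod_tshift_right tprod_tres_right tprod_P_P_left[OF spm]
      tres_tsub tres_tadd tres_tshift tres_tres tres_tprod tshift_tshift tshift_tsub tshift_tadd,
      intro ext, simp add: RR_scalar_def tsub_def tadd_def tshift_def algebra_simps mult_2 numeral_2_eq_2)

lemma RR_scalar_eq: "RR_scalar k X = tsub (tadd (tadd (tshift 0 2 X) (tshift 2 0 X))
    (\<lambda>n m a b c d. of_int k * tshift 1 1 X n m a b c d)) (tshift 2 2 X)"
  by (simp add: fun_eq_iff RR_scalar_def tsub_def tadd_def)

lemma tprod_of_int_right: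
  "tprod s \<kappa> X (\<lambda>n m a b c d. of_int k * Y n m a b c d) = (\<lambda>n m a b c d. of_int k * tprod s \<kappa> X Y n m a b c d)"
proof -
  have "tres \<kappa> (\<lambda>n m a b c d. of_int k * Y n m a b c d) = (\<lambda>n m a b c d. of_int k * tres \<kappa> Y n m a b c d)"
    by (simp add: fun_eq_iff tres_def)
  then show ?thesis
    unfolding tprod_def by (simp add: fun_eq_iff tmul_tsign sum_distrib_left mult_of_int_commute mult.assoc)
qed

lemma tprod_RR_scalar_right: "tprod s \<kappa> X (RR_scalar k Y) = RR_scalar k (tprod s \<kappa> X Y)"
  by (simp only: RR_scalar_eq tprod_tsub_right tprod_tadd_right tprod_of_int_right tprod_tshift_right)

lemma of_int_mult_left_commute: "of_int k * (of_int l * x) = of_int l * (of_int k * (x::'a::ring_1))"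
  by (simp only: mult.assoc[symmetric] of_int_mult[symmetric] mult.commute[of k l])

lemma RR_scalar_commute: "RR_scalar k (RR_scalar l X) = RR_scalar l (RR_scalar k X)"
  by (intro ext) (auto simp: RR_scalar_def tshift_def algebra_simps of_int_mult_left_commute)

lemma RR_scalar_inject:
  assumes "RR_scalar k X = RR_scalar k Y"
  shows "X = Y"
proof -
  have "X n m a b c d = Y n m a b c d" for n m a b c d
  proof (induction n arbitrary: m rule: less_induct)
    case (less n)
    have lower: "X n' m' a b c d = Y n' m' a b c d" if "n' < n" for n' m'
      using less that by blast
    have "RR_scalar k X n (m + 2) a b c d = RR_scalar k Y n (m + 2) a b c d"
      using assms by simp
    then show ?case
      by (simp add: RR_scalar_def tshift_def lower split: if_splits)
  qed
  then show ?thesis by (intro ext)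
qed

lemma B2_commute_BB1:
  assumes spm: "\<forall>i\<in>{1..\<kappa>}. s i = 1 \<or> s i = -1"
    and RE: "reflection_eq \<kappa> s eps b" and phi: "is_C_algebra (phi :: complex \<Rightarrow> 'a::ring_1)"
  shows "tprod s \<kappa> (B2 s eps b) (BB1 s \<kappa> eps b) = (tprod s \<kappa> (BB1 s \<kappa> eps b) (B2 s eps b) :: 'a tser)"
proof -
  let ?B1 = "B1 s eps b :: 'a tser" and ?B2 = "B2 s eps b :: 'a tser" and ?N1 = "tneg_u (B1 s eps b) :: 'a tser"
    and ?C = "BB1 s \<kappa> eps b :: 'a tser" and ?Rm = "Rminus s :: 'a tser" and ?Rp = "Rplus s :: 'a tser"
  let ?Qm = "tneg_u ?Rp" and ?Qp = "tneg_u ?Rm" and ?I = "tconst 0 0 Id2 :: 'a tser"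
  let ?prod = "tprod s \<kappa>"
  have RE1: "?prod ?Rm (?prod ?B1 (?prod ?Rp (?prod ?B2 Z))) = ?prod ?B2 (?prod ?Rp (?prod ?B1 (?prod ?Rm Z)))" for Z
    using arg_cong[OF reflection_eq_tprod[OF RE], of "\<lambda>X. ?prod X Z"] by (simp only: tprod_assoc)
  have RE2: "?prod ?Qp (?prod ?N1 (?prod ?Qm ?B2)) = ?prod ?B2 (?prod ?Qm (?prod ?N1 ?Qp))"
    using arg_cong[OF reflection_eq_tprod[OF RE], of tneg_u]
    by (simp only: tneg_u_tprod tneg_u_B2 tprod_assoc)
  have C_P: "tres \<kappa> ?C = ?C" "?prod (tconst 0 0 (Pmat s)) ?C = ?prod ?C (tconst 0 0 (Pmat s))"
    by (simp_all add: BB1_commute_P[OF spm RE phi])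
  have C_Rp: "?prod ?Rp (?prod ?C Z) = ?prod ?C (?prod ?Rp Z)" for Z
    by (metis tprod_assoc tprod_commute_R(1)[OF C_P])
  have C_Rm: "?prod ?Rm (?prod ?C Z) = ?prod ?C (?prod ?Rm Z)" for Z
    by (metis tprod_assoc tprod_commute_R(2)[OF C_P])
  have Rp_Qp: "?prod ?Rp ?Qp = RR_scalar 2 (tres \<kappa> ?I)"
    using tprod_Rplus_neg_Rminus[OF spm, of ?I] by simp
  let ?W = "?prod ?Rm (?prod ?B1 (?prod ?Rp (?prod ?B2 (?prod ?Qm (?prod ?N1 ?Qp)))))"
  have "?W = ?prod ?B2 (?prod ?Rp (?prod ?B1 (?prod ?Rm (?prod ?Qm (?prod ?N1 ?Qp)))))"
    by (rule RE1)
  also have "\<dots> = RR_scalar (-2) (?prod ?B2 (?prod ?Rp (?prod ?C ?Qp)))"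
    by (simp add: tprod_Rminus_neg_Rplus[OF spm] tprod_RR_scalar_right tprod_assoc BB1_def)
  also have "\<dots> = RR_scalar (-2) (?prod ?B2 (?prod ?C (RR_scalar 2 (tres \<kappa> ?I))))"
    by (simp only: C_Rp Rp_Qp)
  finally have W1: "?W = RR_scalar (-2) (RR_scalar 2 (?prod ?B2 ?C))"
    by (simp add: tprod_RR_scalar_right)
  have "?W = ?prod ?Rm (?prod ?B1 (?prod ?Rp (?prod ?Qp (?prod ?N1 (?prod ?Qm ?B2)))))"
    by (simp only: RE2)
  also have "\<dots> = RR_scalar 2 (?prod ?Rm (?prod ?C (?prod ?Qm ?B2)))"
    by (simp add: tprod_Rplus_neg_Rminus[OF spm] tprod_RR_scalar_right tprod_assoc BB1_def)
  also have "\<dots> = RR_scalar 2 (?prod ?C (RR_scalar (-2) (tres \<kappa> ?B2)))"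
    by (simp only: C_Rm tprod_Rminus_neg_Rplus[OF spm])
  finally have W2: "?W = RR_scalar (-2) (RR_scalar 2 (?prod ?C ?B2))"
    by (simp add: tprod_RR_scalar_right RR_scalar_commute)
  from W1 W2 show ?thesis
    by (metis RR_scalar_inject)
qed

lemma BBminus_commute_b:
  assumes spm: "\<forall>i\<in>{1..\<kappa>}. s i = 1 \<or> s i = -1"
    and RE: "reflection_eq \<kappa> s eps b" and phi: "is_C_algebra (phi :: complex \<Rightarrow> 'a::ring_1)"
    and idx: "i \<in> {1..\<kappa>}" "j \<in> {1..\<kappa>}" and "1 \<le> k"
  shows "BBminus \<kappa> s eps b n 1 1 * b i j k = b i j k * (BBminus \<kappa> s eps b n 1 1 :: 'a)"
proof -
  let ?F = "BBminus \<kappa> s eps b n 1 1 :: 'a" and ?m = "msign (par s i * par s j + par s j) :: 'a"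
  have signs: "tsign s i i i j i j = (1::'a)" "tsign s i i i i i j = (1::'a)"
    unfolding tsign_def by (rule msign_even, auto simp: even_add even_mult_iff)+
  have B2_val: "B2 s eps b 0 k i i i j = ?m * b i j k"
    using \<open>1 \<le> k\<close> by (simp add: B2_def bser_def)
  have "tprod s \<kappa> (B2 s eps b) (BB1 s \<kappa> eps b) n k i i i j = tsign s i i i j i j * B2 s eps b 0 k i i i j * ?F"
    unfolding tprod_def[of s \<kappa> "B2 s eps b"] tres_BB1 tmul_tsign
    by (subst sum4_collapse[where p'=0 and q'=k and b'=i and d'=j and T="tsign s i i i j i j * B2 s eps b 0 k i i i j * ?F"])
       (use idx in \<open>auto simp: tres_def BB1_scalar[OF spm RE phi] B2_def\<close>)
  moreover have "tprod s \<kappa> (BB1 s \<kappa> eps b) (B2 s eps b) n k i i i j = tsign s i i i i i j * ?F * B2 s eps b 0 k i i i j"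
    unfolding tprod_def[of s \<kappa> "BB1 s \<kappa> eps b"] tres_BB1 tmul_tsign
    by (subst sum4_collapse[where p'=n and q'=0 and b'=i and d'=i and T="tsign s i i i i i j * ?F * B2 s eps b 0 k i i i j"])
       (use idx in \<open>auto simp: tres_def BB1_scalar[OF spm RE phi] B2_def\<close>)
  ultimately have "?m * (b i j k * ?F) = ?m * (?F * b i j k)"
    by (simp only: B2_commute_BB1[OF spm RE phi] signs B2_val mult_1_left mult.assoc msign_commute)
  then have "?m * (?m * (b i j k * ?F)) = ?m * (?m * (?F * b i j k))"
    by simp
  then show ?thesis
    by (simp only: mult.assoc[symmetric] msign_mult_self mult_1_left)
qed

theorem proposition3p2:
  fixes m n \<kappa> :: nat and s eps :: "nat \<Rightarrow> int"
    and phi :: "complex \<Rightarrow> 'a::ring_1" and b :: "nat \<Rightarrow> nat \<Rightarrow> nat \<Rightarrow> 'a"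
  assumes "\<kappa> = m + n"
    and "\<forall>i\<in>{1..\<kappa>}. s i = 1 \<or> s i = -1"
    and "card {i\<in>{1..\<kappa>}. s i = 1} = m"
    and "\<forall>i\<in>{1..\<kappa>}. eps i = 1 \<or> eps i = -1"
    and "is_C_algebra phi"
    and "reflection_eq \<kappa> s eps b"
  shows "\<exists>f :: nat \<Rightarrow> 'a.
           (\<forall>r. odd r \<longrightarrow> f r = 0)
         \<and> (\<forall>r i j k. i \<in> {1..\<kappa>} \<longrightarrow> j \<in> {1..\<kappa>} \<longrightarrow> k \<ge> 1 \<longrightarrow> f r * b i j k = b i j k * f r)
         \<and> (\<forall>r i l. i \<in> {1..\<kappa>} \<longrightarrow> l \<in> {1..\<kappa>} \<longrightarrow>
              BBminus \<kappa> s eps b r i l = (if i = l then f r else 0))"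
proof -
  note spm = assms(2) and phi = assms(5) and RE = assms(6)
  define f where "f r = BBminus \<kappa> s eps b r 1 1" for r
  have "f r = 0" if "odd r" for r
  proof (cases "\<kappa> = 0")
    case True
    then show ?thesis by (simp add: f_def BBminus_def)
  next
    case False
    then show ?thesis using BBminus_diag_odd[OF spm RE phi _ that] by (simp add: f_def)
  qed
  moreover have "f r * b i j k = b i j k * f r" if "i \<in> {1..\<kappa>}" "j \<in> {1..\<kappa>}" "k \<ge> 1" for r i j k
    unfolding f_def by (rule BBminus_commute_b[OF spm RE phi that])
  moreover have "BBminus \<kappa> s eps b r i l = (if i = l then f r else 0)" if "i \<in> {1..\<kappa>}" "l \<in> {1..\<kappa>}" for r i l
    unfolding f_def by (rule BBminus_scalar[OF spm RE phi that])
  ultimately show ?thesis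
    by blast
qed

end
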